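(* Let $\Gamma_1,\Gamma_2$ be propositional theories such that no atom occurring in $\Gamma_1$ is a head atom of $\Gamma_2$, and let $S$ be a set of atoms containing all head atoms of $\Gamma_1$ and no head atoms of $\Gamma_2$. Then a set $X$ of atoms is a stable model of $\Gamma_1\cup\Gamma_2$ if and only if $X\cap S$ is a stable model of $\Gamma_1$ and $X$ is a stable model of the theory $(X\cap S)\cup\Gamma_2$ (where each atom of $X\cap S$ is regarded as a formula).
   Context: Formulas are built from atoms and $\bot$ using $\wedge,\vee,\to$; $\top$, $\neg F$, $F\leftrightarrow G$ abbreviate $\bot\to\bot$, $F\to\bot$, $(F\to G)\wedge(G\to F)$. Reduct: $\bot^X=\bot$; $a^X=a$ if $a\in X$, else $\bot$; $(F\otimes G)^X=F^X\otimes G^X$ if $X\models F\otimes G$, else $\bot$; $\Gamma^X=\{F^X:F\in\Gamma\}$. $X$ is a stable model of $\Gamma$ if $X\models\Gamma^X$ and no proper subset of $X$ satisfies $\Gamma^X$. An occurrence of an atom is strictly positive if it lies in the antecedent of no implication (abbreviations expanded); a head atom of a theory is an atom with a strictly positive occurrence in it. *)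

theory Defs
  imports Main
begin

datatype 'a form = Atom 'a | Bot | And "'a form" "'a form" | Or "'a form" "'a form"
  | Imp "'a form" "'a form"

definition Top :: "'a form" where "Top = Imp Bot Bot"
definition Neg :: "'a form \<Rightarrow> 'a form" where "Neg F = Imp F Bot"
definition Iff :: "'a form \<Rightarrow> 'a form \<Rightarrow> 'a form" where
  "Iff F G = And (Imp F G) (Imp G F)"

fun sat :: "'a set \<Rightarrow> 'a form \<Rightarrow> bool" where
  "sat X (Atom a) = (a \<in> X)"
| "sat X Bot = False"
| "sat X (And F G) = (sat X F \<and> sat X G)"
| "sat X (Or F G) = (sat X F \<or> sat X G)"
| "sat X (Imp F G) = (sat X F \<longrightarrow> sat X G)"

definition sat_th :: "'a set \<Rightarrow> 'a form set \<Rightarrow> bool" where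
  "sat_th X \<Gamma> = (\<forall>F\<in>\<Gamma>. sat X F)"

fun reduct :: "'a form \<Rightarrow> 'a set \<Rightarrow> 'a form" where
  "reduct Bot X = Bot"
| "reduct (Atom a) X = (if a \<in> X then Atom a else Bot)"
| "reduct (And F G) X = (if sat X (And F G) then And (reduct F X) (reduct G X) else Bot)"
| "reduct (Or F G) X = (if sat X (Or F G) then Or (reduct F X) (reduct G X) else Bot)"
| "reduct (Imp F G) X = (if sat X (Imp F G) then Imp (reduct F X) (reduct G X) else Bot)"

definition reduct_th :: "'a form set \<Rightarrow> 'a set \<Rightarrow> 'a form set" where
  "reduct_th \<Gamma> X = (\<lambda>F. reduct F X) ` \<Gamma>"

definition stable_model :: "'a set \<Rightarrow> 'a form set \<Rightarrow> bool" where
  "stable_model X \<Gamma> = (sat_th X (reduct_th \<Gamma> X) \<and>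
      (\<forall>Y. Y \<subset> X \<longrightarrow> \<not> sat_th Y (reduct_th \<Gamma> X)))"

fun atoms :: "'a form \<Rightarrow> 'a set" where
  "atoms (Atom a) = {a}"
| "atoms Bot = {}"
| "atoms (And F G) = atoms F \<union> atoms G"
| "atoms (Or F G) = atoms F \<union> atoms G"
| "atoms (Imp F G) = atoms F \<union> atoms G"

definition atoms_th :: "'a form set \<Rightarrow> 'a set" where
  "atoms_th \<Gamma> = (\<Union>F\<in>\<Gamma>. atoms F)"

text \<open>Atoms with a strictly positive occurrence (not in the antecedent of any implication).\<close>
fun heads :: "'a form \<Rightarrow> 'a set" where
  "heads (Atom a) = {a}"
| "heads Bot = {}"
| "heads (And F G) = heads F \<union> heads G"
| "heads (Or F G) = heads F \<union> heads G"
| "heads (Imp F G) = heads G"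

definition head_atoms :: "'a form set \<Rightarrow> 'a set" where
  "head_atoms \<Gamma> = (\<Union>F\<in>\<Gamma>. heads F)"

end

theory Submission
  imports Defs
begin

(* Two facts about reducts drive the proof.
   (1) Locality: the satisfaction of a formula, and its reduct, only depend on the
       atoms occurring in it.  Since no atom of Gamma1 is a head atom of Gamma2, and
       a stable model consists of head atoms only, on the atoms of Gamma1 a stable
       candidate X looks exactly like X \<inter> S; so Gamma1 may be evaluated at X \<inter> S.
   (2) Shrinking: if X satisfies F and Y \<subseteq> X differs from X only outside the head
       atoms of F, then Y satisfies the reduct F^X.  This shows that stable models
       consist of head atoms, and lets one shrink a model of one half of the reduct
       without breaking the other half. *)

lemma sat_local: "\<forall>a\<in>atoms F. a \<in> X \<longleftrightarrow> a \<in> Y \<Longrightarrow> sat X F = sat Y F"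
  by (induction F) auto

lemma reduct_local: "\<forall>a\<in>atoms F. a \<in> X \<longleftrightarrow> a \<in> Y \<Longrightarrow> reduct F X = reduct F Y"
proof (induction F)
  case (And F G) then show ?case using sat_local[of "And F G" X Y] by (simp del: sat.simps)
next
  case (Or F G) then show ?case using sat_local[of "Or F G" X Y] by (simp del: sat.simps)
next
  case (Imp F G) then show ?case using sat_local[of "Imp F G" X Y] by (simp del: sat.simps)
qed auto

lemma atoms_reduct: "atoms (reduct F X) \<subseteq> atoms F"
  by (induction F) auto

lemma sat_reduct_self: "sat X (reduct F X) = sat X F"
  by (induction F) auto

text \<open>A reduct w.r.t. X is \<open>\<bottom>\<close> unless X satisfies the formula.\<close>
lemma sat_reduct_imp_sat: "sat Y (reduct F X) \<Longrightarrow> sat X F"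
  by (cases F) (auto split: if_splits)

lemma sat_reduct_shrink:
  "Y \<subseteq> X \<Longrightarrow> (X - Y) \<inter> heads F = {} \<Longrightarrow> sat X F \<Longrightarrow> sat Y (reduct F X)"
proof (induction F)
  case (Imp F G)
  then show ?case using sat_reduct_imp_sat[of Y F X] by auto
qed auto

lemma sat_th_union: "sat_th X (A \<union> B) = (sat_th X A \<and> sat_th X B)"
  by (auto simp: sat_th_def)

lemma reduct_th_union: "reduct_th (A \<union> B) X = reduct_th A X \<union> reduct_th B X"
  by (auto simp: reduct_th_def)

lemma head_atoms_union: "head_atoms (A \<union> B) = head_atoms A \<union> head_atoms B"
  by (simp add: head_atoms_def)

lemma sat_th_reduct_self: "sat_th X (reduct_th \<Gamma> X) = sat_th X \<Gamma>"
  by (simp add: sat_th_def reduct_th_def sat_reduct_self)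

lemma stable_model_iff:
  "stable_model X \<Gamma> \<longleftrightarrow> sat_th X \<Gamma> \<and> (\<forall>Y. Y \<subset> X \<longrightarrow> \<not> sat_th Y (reduct_th \<Gamma> X))"
  by (simp add: stable_model_def sat_th_reduct_self)

lemma sat_th_local:
  assumes "\<forall>a\<in>atoms_th \<Gamma>. a \<in> X \<longleftrightarrow> a \<in> Y"
  shows "sat_th X \<Gamma> = sat_th Y \<Gamma>"
proof -
  have "sat X F = sat Y F" if "F \<in> \<Gamma>" for F
    using that assms by (intro sat_local) (auto simp: atoms_th_def)
  then show ?thesis by (auto simp: sat_th_def)
qed

lemma reduct_th_local:
  assumes "\<forall>a\<in>atoms_th \<Gamma>. a \<in> X \<longleftrightarrow> a \<in> Y"
  shows "reduct_th \<Gamma> X = reduct_th \<Gamma> Y"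
proof -
  have "reduct F X = reduct F Y" if "F \<in> \<Gamma>" for F
    using that assms by (intro reduct_local) (auto simp: atoms_th_def)
  then show ?thesis unfolding reduct_th_def by (rule image_cong[OF refl])
qed

lemma sat_th_reduct_local:
  assumes "\<forall>a\<in>atoms_th \<Gamma>. a \<in> X \<longleftrightarrow> a \<in> Y"
  shows "sat_th X (reduct_th \<Gamma> Z) = sat_th Y (reduct_th \<Gamma> Z)"
proof -
  have "atoms_th (reduct_th \<Gamma> Z) \<subseteq> atoms_th \<Gamma>"
    using atoms_reduct by (fastforce simp: atoms_th_def reduct_th_def)
  then show ?thesis using assms by (intro sat_th_local) blast
qed

lemma sat_th_reduct_shrink:
  assumes "Y \<subseteq> X" "(X - Y) \<inter> head_atoms \<Gamma> = {}" "sat_th X \<Gamma>"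
  shows "sat_th Y (reduct_th \<Gamma> X)"
proof -
  have "sat Y (reduct F X)" if "F \<in> \<Gamma>" for F
  proof (rule sat_reduct_shrink[OF assms(1)])
    show "(X - Y) \<inter> heads F = {}" using that assms(2) by (auto simp: head_atoms_def)
    show "sat X F" using that assms(3) by (auto simp: sat_th_def)
  qed
  then show ?thesis by (auto simp: sat_th_def reduct_th_def)
qed

text \<open>Every stable model consists of head atoms: otherwise dropping the other atoms
  would give a smaller model of the reduct.\<close>
lemma stable_model_heads:
  assumes "stable_model X \<Gamma>" shows "X \<subseteq> head_atoms \<Gamma>"
proof (rule ccontr)
  assume "\<not> X \<subseteq> head_atoms \<Gamma>"
  then have smaller: "X \<inter> head_atoms \<Gamma> \<subset> X" by blast
  have "sat_th (X \<inter> head_atoms \<Gamma>) (reduct_th \<Gamma> X)"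
    using assms by (intro sat_th_reduct_shrink) (auto simp: stable_model_iff)
  then show False using assms smaller by (auto simp: stable_model_iff)
qed

text \<open>Atoms from the interpretation are their own reducts, so adding them as facts
  just forces them into every model of the reduct.\<close>
lemma sat_th_reduct_facts:
  assumes "A \<subseteq> X"
  shows "sat_th Y (reduct_th (Atom ` A \<union> \<Gamma>) X) \<longleftrightarrow> A \<subseteq> Y \<and> sat_th Y (reduct_th \<Gamma> X)"
proof -
  have "reduct_th (Atom ` A) X = Atom ` A"
    using assms by (force simp: reduct_th_def image_iff)
  moreover have "sat_th Y (Atom ` A) \<longleftrightarrow> A \<subseteq> Y"
    by (auto simp: sat_th_def)
  ultimately show ?thesis by (simp add: reduct_th_union sat_th_union)
qed

lemma agree_on_restriction:
  assumes "atoms_th \<Gamma> \<inter> H = {}" "X \<subseteq> S \<union> H"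
  shows "\<forall>a\<in>atoms_th \<Gamma>. a \<in> X \<longleftrightarrow> a \<in> X \<inter> S"
  using assms by blast

lemma splitting_forward:
  assumes disj: "atoms_th \<Gamma>1 \<inter> head_atoms \<Gamma>2 = {}"
    and heads1: "head_atoms \<Gamma>1 \<subseteq> S"
    and heads2: "S \<inter> head_atoms \<Gamma>2 = {}"
    and st: "stable_model X (\<Gamma>1 \<union> \<Gamma>2)"
  shows "stable_model (X \<inter> S) \<Gamma>1 \<and> stable_model X (Atom ` (X \<inter> S) \<union> \<Gamma>2)"
proof -
  let ?A = "X \<inter> S"
  have XH: "X \<subseteq> S \<union> head_atoms \<Gamma>2"
    using stable_model_heads[OF st] heads1 by (auto simp: head_atoms_union)
  have agree: "\<forall>a\<in>atoms_th \<Gamma>1. a \<in> X \<longleftrightarrow> a \<in> ?A"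
    using agree_on_restriction[OF disj XH] .
  have model: "sat_th X \<Gamma>1" "sat_th X \<Gamma>2"
    using st by (auto simp: stable_model_iff sat_th_union)
  have minimal: "\<not> sat_th Y (reduct_th \<Gamma>1 X) \<or> \<not> sat_th Y (reduct_th \<Gamma>2 X)" if "Y \<subset> X" for Y
    using st that by (auto simp: stable_model_iff reduct_th_union sat_th_union)
  have "stable_model ?A \<Gamma>1"
    unfolding stable_model_iff
  proof (intro conjI allI impI notI)
    show "sat_th ?A \<Gamma>1" using model(1) sat_th_local[OF agree] by simp
  next
    fix Y assume Y: "Y \<subset> ?A" and sY: "sat_th Y (reduct_th \<Gamma>1 ?A)"
    \<comment> \<open>Extend Y by the atoms of X outside S: a model of both halves of the reduct below X.\<close>
    let ?Z = "Y \<union> (X - S)"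
    have Z: "?Z \<subset> X" "?Z \<subseteq> S \<union> head_atoms \<Gamma>2" "?Z \<inter> S = Y" using Y XH by blast+
    have "sat_th ?Z (reduct_th \<Gamma>1 X) \<longleftrightarrow> sat_th (?Z \<inter> S) (reduct_th \<Gamma>1 X)"
      by (rule sat_th_reduct_local[OF agree_on_restriction[OF disj Z(2)]])
    also have "\<dots> \<longleftrightarrow> sat_th Y (reduct_th \<Gamma>1 ?A)"
      unfolding Z(3) reduct_th_local[OF agree] ..
    finally have "sat_th ?Z (reduct_th \<Gamma>1 X)" using sY by blast
    moreover have "sat_th ?Z (reduct_th \<Gamma>2 X)"
      using Z(1) heads2 model(2) by (intro sat_th_reduct_shrink) auto
    ultimately show False using minimal[OF Z(1)] by blast
  qed
  moreover have "stable_model X (Atom ` ?A \<union> \<Gamma>2)"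
    unfolding stable_model_iff
  proof (intro conjI allI impI notI)
    show "sat_th X (Atom ` ?A \<union> \<Gamma>2)" using model(2) by (auto simp: sat_th_def)
  next
    fix Y assume Y: "Y \<subset> X" and "sat_th Y (reduct_th (Atom ` ?A \<union> \<Gamma>2) X)"
    then have "?A \<subseteq> Y" "sat_th Y (reduct_th \<Gamma>2 X)" by (simp_all add: sat_th_reduct_facts)
    moreover have "sat_th Y (reduct_th \<Gamma>1 X)"
      using Y \<open>?A \<subseteq> Y\<close> heads1 model(1) by (intro sat_th_reduct_shrink) auto
    ultimately show False using minimal[OF Y] by blast
  qed
  ultimately show ?thesis ..
qed

lemma splitting_backward:
  assumes disj: "atoms_th \<Gamma>1 \<inter> head_atoms \<Gamma>2 = {}"
    and s1: "stable_model (X \<inter> S) \<Gamma>1"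
    and s2: "stable_model X (Atom ` (X \<inter> S) \<union> \<Gamma>2)"
  shows "stable_model X (\<Gamma>1 \<union> \<Gamma>2)"
  unfolding stable_model_iff
proof (intro conjI allI impI notI)
  let ?A = "X \<inter> S"
  have "head_atoms (Atom ` ?A) \<subseteq> S" by (auto simp: head_atoms_def)
  then have XH: "X \<subseteq> S \<union> head_atoms \<Gamma>2"
    using stable_model_heads[OF s2] by (auto simp: head_atoms_union)
  have agree: "\<forall>a\<in>atoms_th \<Gamma>1. a \<in> X \<longleftrightarrow> a \<in> ?A"
    using agree_on_restriction[OF disj XH] .
  have "sat_th X \<Gamma>1" using s1 sat_th_local[OF agree] by (simp add: stable_model_iff)
  moreover have "sat_th X \<Gamma>2" using s2 by (simp add: stable_model_iff sat_th_union)
  ultimately show "sat_th X (\<Gamma>1 \<union> \<Gamma>2)" by (simp add: sat_th_union)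
  fix Y assume Y: "Y \<subset> X" and "sat_th Y (reduct_th (\<Gamma>1 \<union> \<Gamma>2) X)"
  then have y1: "sat_th Y (reduct_th \<Gamma>1 X)" and y2: "sat_th Y (reduct_th \<Gamma>2 X)"
    by (simp_all add: reduct_th_union sat_th_union)
  \<comment> \<open>The S-part of Y is a model of the reduct of Gamma1, so by minimality it is all of X \<inter> S.\<close>
  have "Y \<subseteq> S \<union> head_atoms \<Gamma>2" using Y XH by blast
  then have "sat_th Y (reduct_th \<Gamma>1 X) \<longleftrightarrow> sat_th (Y \<inter> S) (reduct_th \<Gamma>1 X)"
    by (rule sat_th_reduct_local[OF agree_on_restriction[OF disj]])
  then have "sat_th (Y \<inter> S) (reduct_th \<Gamma>1 ?A)"
    using y1 unfolding reduct_th_local[OF agree] by blast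
  moreover have "Y \<inter> S \<subseteq> ?A" using Y by blast
  ultimately have "Y \<inter> S = ?A" using s1 unfolding stable_model_iff by (meson psubsetI)
  then have "?A \<subseteq> Y" by blast
  then have "sat_th Y (reduct_th (Atom ` ?A \<union> \<Gamma>2) X)"
    using y2 by (simp add: sat_th_reduct_facts)
  then show False using s2 Y unfolding stable_model_iff by blast
qed

theorem proposition10:
  fixes \<Gamma>1 \<Gamma>2 :: "'a form set" and S X :: "'a set"
  assumes "atoms_th \<Gamma>1 \<inter> head_atoms \<Gamma>2 = {}"
    and "head_atoms \<Gamma>1 \<subseteq> S"
    and "S \<inter> head_atoms \<Gamma>2 = {}"
  shows "stable_model X (\<Gamma>1 \<union> \<Gamma>2) \<longleftrightarrow>
    (stable_model (X \<inter> S) \<Gamma>1 \<and> stable_model X (Atom ` (X \<inter> S) \<union> \<Gamma>2))"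
  using splitting_forward[OF assms] splitting_backward[OF assms(1)] by blast

end
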